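(* For every integer $k\ge2$, with $p_k:=2^{1-k}$, $$p_k\,G\!\left(\frac{k^2+k+1}{(2k+1)^2}\right)+(1-p_k)\,G\!\left(\frac{k^2+k-1}{(2k+1)^2}\right)\ \ge\ G\!\left(\tfrac14\right),$$ and moreover $$p_k\,G\!\left(\frac{k^2+k+1}{(2k+1)^2}\right)+(1-p_k)\cdot\frac12\ \ge\ G\!\left(\tfrac14\right).$$
   Context: $\Phi$ denotes the standard normal distribution function. For $c>0$, $G(c):=\frac12\left(1-\frac12\,\frac{1-\Phi(c^{-1/2})}{1-\Phi(\sqrt2)}\right)$. *)

theory Defs
  imports "HOL-Probability.Probability"
begin

definition Phi :: "real \<Rightarrow> real" where
  "Phi x = (LINT t:{..x}|lborel. std_normal_density t)"

definition G :: "real \<Rightarrow> real" where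
  "G c = (1/2) * (1 - (1/2) * ((1 - Phi (1 / sqrt c)) / (1 - Phi (sqrt 2))))"

end

theory Submission
  imports Defs
begin

(*
  With T x = 1 - Phi x the Gaussian tail, G c is 1/2 minus a nonnegative multiple of
  T (sqrt (1/c)), and G (1/4) belongs to the point 2. For the points x1 < 2 < x2 belonging to
  the two arguments of G, the first inequality thus says that p times the normal mass of
  [x1, 2] is at most 1 - p times the mass of [2, x2]; the second follows since G <= 1/2.
  Both masses are bracketed by rectangles, the normal density being decreasing on [0, oo).
  With M = (2k+1)^2 the two intervals have lengths about 3/M and 5/M, the densities at their
  ends differ by a factor at most 2, and p <= 1/4 once k >= 3. For k = 2, where p = 1/2,
  the mass of [2, x2] is split at sqrt (9/2) to sharpen the bound.
*)

lemma set_integrable_std_normal_density: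
  "A \<in> sets borel \<Longrightarrow> set_integrable lborel A std_normal_density"
  unfolding set_integrable_def by (rule integrable_mult_indicator) auto

lemma Phi_diff:
  assumes "a \<le> b"
  shows "Phi b - Phi a = (LINT t:{a<..b}|lborel. std_normal_density t)"
proof -
  have "{..b} = {..a} \<union> {a<..b}" using assms by auto
  then have "Phi b = Phi a + (LINT t:{a<..b}|lborel. std_normal_density t)"
    unfolding Phi_def
    by (simp only:) (rule set_integral_Un, auto intro: set_integrable_std_normal_density)
  then show ?thesis by simp
qed

lemma Phi_le_1: "Phi x \<le> 1"
proof -
  have "Phi x \<le> (\<integral>t. std_normal_density t \<partial>lborel)"
    unfolding Phi_def set_lebesgue_integral_def
    by (intro integral_mono integrable_mult_indicator) (auto simp: indicator_def)
  also have "\<dots> = 1" by simp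
  finally show ?thesis .
qed

lemma std_normal_density_antimono:
  assumes "0 \<le> x" "x \<le> y"
  shows "std_normal_density y \<le> std_normal_density x"
proof -
  have "x\<^sup>2 \<le> y\<^sup>2" using assms by (simp add: power_mono)
  then show ?thesis by (simp add: std_normal_density_def divide_right_mono)
qed

lemma Phi_diff_bounds:
  assumes "0 \<le> a" "a \<le> b"
  shows "(b - a) * std_normal_density b \<le> Phi b - Phi a"
    and "Phi b - Phi a \<le> (b - a) * std_normal_density a"
proof -
  have measure: "measure lborel {a<..b} = b - a" using assms by simp
  have "(LINT t:{a<..b}|lborel. std_normal_density b) \<le> (LINT t:{a<..b}|lborel. std_normal_density t)"
    using assms
    by (intro set_integral_mono set_integrable_std_normal_density std_normal_density_antimono)
       (auto simp: set_integrable_def)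
  then show "(b - a) * std_normal_density b \<le> Phi b - Phi a"
    using assms by (simp add: Phi_diff set_integral_const measure)
  have "(LINT t:{a<..b}|lborel. std_normal_density t) \<le> (LINT t:{a<..b}|lborel. std_normal_density a)"
    using assms
    by (intro set_integral_mono set_integrable_std_normal_density std_normal_density_antimono)
       (auto simp: set_integrable_def)
  then show "Phi b - Phi a \<le> (b - a) * std_normal_density a"
    using assms by (simp add: Phi_diff set_integral_const measure)
qed

lemma G_eq_tail: "G c = 1/2 - (1 - Phi (sqrt (1/c))) / (4 * (1 - Phi (sqrt 2)))"
proof -
  have halve: "(1/2) * (1 - (1/2) * (a / q)) = 1/2 - a / (4 * q)" for a q :: real
    by (simp add: right_diff_distrib)
  show ?thesis unfolding G_def halve real_sqrt_divide real_sqrt_one ..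
qed

lemma G_le_half: "G c \<le> 1/2"
  using Phi_le_1[of "sqrt (1/c)"] Phi_le_1[of "sqrt 2"] by (simp add: G_eq_tail)

lemma G_quarter_le_mixture:
  assumes "0 \<le> p" "p \<le> 1"
    and balance: "p * (Phi 2 - Phi (sqrt (1/c\<^sub>1))) \<le> (1 - p) * (Phi (sqrt (1/c\<^sub>2)) - Phi 2)"
  shows "G (1/4) \<le> p * G c\<^sub>1 + (1 - p) * G c\<^sub>2"
proof -
  define q where "q = 4 * (1 - Phi (sqrt 2))"
  have G: "G c = 1/2 - (1 - Phi (sqrt (1/c))) / q" for c by (simp add: G_eq_tail q_def)
  have "q \<ge> 0" using Phi_le_1 by (simp add: q_def)
  moreover have "p * (1 - Phi (sqrt (1/c\<^sub>1))) + (1 - p) * (1 - Phi (sqrt (1/c\<^sub>2))) \<le> 1 - Phi 2"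
    using balance by (simp add: algebra_simps)
  ultimately have "(p * (1 - Phi (sqrt (1/c\<^sub>1))) + (1 - p) * (1 - Phi (sqrt (1/c\<^sub>2)))) / q
      \<le> (1 - Phi 2) / q"
    by (rule divide_right_mono[rotated])
  moreover have "p * (1/2 - a / q) + (1 - p) * (1/2 - b / q) = 1/2 - (p * a + (1 - p) * b) / q"
    for a b
    by (simp add: algebra_simps add_divide_distrib diff_divide_distrib)
  ultimately show ?thesis unfolding G by simp
qed

lemma exp_le_inverse_one_minus:
  fixes x :: real
  assumes "x < 1"
  shows "exp x \<le> 1 / (1 - x)"
proof -
  have "1 - x \<le> exp (- x)" using exp_ge_add_one_self[of "- x"] by simp
  then have "exp x * (1 - x) \<le> 1" by (simp add: exp_minus field_simps)
  then show ?thesis using assms by (simp add: le_divide_eq)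
qed

(* The densities at x1 and x2 differ by the factor exp ((x2^2 - x1^2) / 2) <= 2,
   and 6 p <= 5 (1 - p). *)
lemma Phi_balance_by_rectangles:
  fixes p x\<^sub>1 x\<^sub>2 e :: real
  assumes "0 \<le> x\<^sub>1" "x\<^sub>1 \<le> 2" "2 \<le> x\<^sub>2" "0 \<le> e" "2 - x\<^sub>1 \<le> 3 * e" "5 * e \<le> x\<^sub>2 - 2"
    and "x\<^sub>2\<^sup>2 - x\<^sub>1\<^sup>2 \<le> 1" "0 \<le> p" "p \<le> 5/11"
  shows "p * (Phi 2 - Phi x\<^sub>1) \<le> (1 - p) * (Phi x\<^sub>2 - Phi 2)"
proof -
  define y where "y = (x\<^sub>2\<^sup>2 - x\<^sub>1\<^sup>2) / 2"
  have "0 \<le> y" using assms unfolding y_def by (simp add: power_mono)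
  then have exp_y: "exp y \<le> 2" using exp_bound_half[of y] assms unfolding y_def by simp
  have "std_normal_density x\<^sub>1 = exp y * std_normal_density x\<^sub>2"
    unfolding y_def std_normal_density_def by (simp add: exp_add[symmetric] field_simps)
  then have density: "std_normal_density x\<^sub>1 \<le> 2 * std_normal_density x\<^sub>2"
    using exp_y by (simp add: mult_right_mono)
  have "p * (Phi 2 - Phi x\<^sub>1) \<le> p * ((2 - x\<^sub>1) * std_normal_density x\<^sub>1)"
    using Phi_diff_bounds(2)[of x\<^sub>1 2] assms by (simp add: mult_left_mono)
  also have "\<dots> \<le> p * ((3 * e) * (2 * std_normal_density x\<^sub>2))"
    using assms density by (intro mult_left_mono mult_mono) auto
  also have "\<dots> = (6 * p) * (e * std_normal_density x\<^sub>2)" by simp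
  also have "\<dots> \<le> (5 * (1 - p)) * (e * std_normal_density x\<^sub>2)"
    using assms by (intro mult_right_mono) auto
  also have "\<dots> = (1 - p) * ((5 * e) * std_normal_density x\<^sub>2)" by simp
  also have "\<dots> \<le> (1 - p) * ((x\<^sub>2 - 2) * std_normal_density x\<^sub>2)"
    using assms by (simp add: mult_left_mono mult_right_mono)
  also have "\<dots> \<le> (1 - p) * (Phi x\<^sub>2 - Phi 2)"
    using Phi_diff_bounds(1)[of 2 x\<^sub>2] assms by (intro mult_left_mono) auto
  finally show ?thesis .
qed

lemma Phi_balance_large:
  fixes M p :: real
  assumes "49 \<le> M" "0 \<le> p" "p \<le> 5/11"
  shows "p * (Phi 2 - Phi (sqrt (4 * M / (M + 3))))
    \<le> (1 - p) * (Phi (sqrt (4 * M / (M - 5))) - Phi 2)"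
proof (rule Phi_balance_by_rectangles[where e = "1/M"])
  show "0 \<le> sqrt (4 * M / (M + 3))" "0 \<le> 1/M" using assms by simp_all
  show "sqrt (4 * M / (M + 3)) \<le> 2"
    using assms by (intro real_le_lsqrt) (auto simp: field_simps)
  show "2 \<le> sqrt (4 * M / (M - 5))"
    using assms by (intro real_le_rsqrt) (auto simp: field_simps)
  have "2 - 3/M \<le> sqrt (4 * M / (M + 3))"
    using assms by (intro real_le_rsqrt) (simp add: field_simps power2_eq_square)
  then show "2 - sqrt (4 * M / (M + 3)) \<le> 3 * (1/M)" by simp
  have "2 + 5/M \<le> sqrt (4 * M / (M - 5))"
    using assms by (intro real_le_rsqrt) (simp add: field_simps power2_eq_square)
  then show "5 * (1/M) \<le> sqrt (4 * M / (M - 5)) - 2" by simp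
  have "32 * M \<le> (M - 5) * (M + 3)"
    using mult_mono[of 49 M 15 "M - 34"] assms by (simp add: algebra_simps)
  then show "(sqrt (4 * M / (M - 5)))\<^sup>2 - (sqrt (4 * M / (M + 3)))\<^sup>2 \<le> 1"
    using assms by (simp add: field_simps)
qed (use assms in auto)

(* The case k = 2 (M = 25, p = 1/2), where the factor 2 above is too crude: the densities are
   compared exactly with the one at 2 on the breakpoints sqrt (25/7) < 2 < sqrt (9/2) < sqrt 5. *)
lemma Phi_balance_small: "Phi 2 - Phi (sqrt (25/7)) \<le> Phi (sqrt 5) - Phi 2"
proof -
  define x\<^sub>1 where "x\<^sub>1 = sqrt (25/7::real)"
  define x\<^sub>2 where "x\<^sub>2 = sqrt (5::real)"
  define z where "z = sqrt (9/2::real)"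
  define E where "E = std_normal_density 2"
  have density: "std_normal_density x = exp (- (x\<^sup>2 - 4) / 2) * E" for x
    unfolding E_def std_normal_density_def by (simp add: exp_add[symmetric] field_simps)
  have squares: "x\<^sub>1\<^sup>2 = 25/7" "x\<^sub>2\<^sup>2 = 5" "z\<^sup>2 = 9/2" by (simp_all add: x\<^sub>1_def x\<^sub>2_def z_def)
  have roots: "18897/10000 \<le> x\<^sub>1" "x\<^sub>1 \<le> 2" "2236/1000 \<le> x\<^sub>2"
    "21213/10000 \<le> z" "z \<le> 21214/10000"
    unfolding x\<^sub>1_def x\<^sub>2_def z_def
    by (rule real_le_rsqrt real_le_lsqrt; simp add: power2_eq_square)+
  have exps: "exp (3/14::real) \<le> 14/11" "3/4 \<le> exp (-1/4::real)" "1/2 \<le> exp (-1/2::real)"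
    using exp_le_inverse_one_minus[of "3/14"] exp_ge_add_one_self[of "-1/4::real"]
      exp_ge_add_one_self[of "-1/2::real"] by simp_all
  have "E \<ge> 0" by (simp add: E_def)
  have "Phi 2 - Phi x\<^sub>1 \<le> ((2 - x\<^sub>1) * exp (3/14)) * E"
    using Phi_diff_bounds(2)[of x\<^sub>1 2] roots by (simp add: density squares)
  also have "\<dots> \<le> ((1103/10000) * (14/11)) * E"
    using roots exps \<open>E \<ge> 0\<close> by (intro mult_right_mono mult_mono) auto
  also have "\<dots> \<le> ((1213/10000) * (3/4) + (1146/10000) * (1/2)) * E"
    using \<open>E \<ge> 0\<close> by (intro mult_right_mono) auto
  also have "\<dots> \<le> ((z - 2) * exp (-1/4) + (x\<^sub>2 - z) * exp (-1/2)) * E"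
    using roots exps \<open>E \<ge> 0\<close> by (intro mult_right_mono add_mono mult_mono) auto
  also have "\<dots> = (z - 2) * std_normal_density z + (x\<^sub>2 - z) * std_normal_density x\<^sub>2"
    by (simp add: density squares algebra_simps)
  also have "\<dots> \<le> (Phi z - Phi 2) + (Phi x\<^sub>2 - Phi z)"
    using Phi_diff_bounds(1)[of 2 z] Phi_diff_bounds(1)[of z x\<^sub>2] roots by (intro add_mono) auto
  finally show ?thesis unfolding x\<^sub>1_def x\<^sub>2_def by simp
qed

theorem lemma4:
  fixes k :: nat
  assumes "k \<ge> 2"
  defines "p \<equiv> (2::real) powi (1 - int k)"
  shows "p * G ((real k ^ 2 + real k + 1) / (2 * real k + 1) ^ 2)
           + (1 - p) * G ((real k ^ 2 + real k - 1) / (2 * real k + 1) ^ 2) \<ge> G (1/4)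
       \<and> p * G ((real k ^ 2 + real k + 1) / (2 * real k + 1) ^ 2)
           + (1 - p) * (1/2) \<ge> G (1/4)"
proof -
  define M where "M = (2 * real k + 1)\<^sup>2"
  have c: "(real k ^ 2 + real k + 1) / (2 * real k + 1) ^ 2 = (M + 3) / (4 * M)"
    "(real k ^ 2 + real k - 1) / (2 * real k + 1) ^ 2 = (M - 5) / (4 * M)"
    unfolding M_def by (simp_all add: divide_simps power2_eq_square, simp_all add: algebra_simps)
  have p: "p = (1/2) ^ (k - 1)"
    using assms by (simp add: p_def power_int_def nat_diff_distrib power_inverse inverse_eq_divide)
  have balance: "p * (Phi 2 - Phi (sqrt (4 * M / (M + 3))))
      \<le> (1 - p) * (Phi (sqrt (4 * M / (M - 5))) - Phi 2)"
  proof (cases "k = 2")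
    case True
    then show ?thesis using Phi_balance_small by (simp add: p M_def)
  next
    case False
    then have "3 \<le> k" using assms by simp
    then have "(1/2::real) ^ (k - 1) \<le> (1/2) ^ 2" by (intro power_decreasing) auto
    moreover have "7\<^sup>2 \<le> M" unfolding M_def using \<open>3 \<le> k\<close> by (intro power_mono) auto
    ultimately show ?thesis by (intro Phi_balance_large) (simp_all add: p power2_eq_square)
  qed
  have "0 \<le> p" "p \<le> 1" by (simp_all add: p power_le_one)
  with balance have "G (1/4) \<le> p * G ((M + 3) / (4 * M)) + (1 - p) * G ((M - 5) / (4 * M))"
    by (intro G_quarter_le_mixture) simp_all
  moreover have "(1 - p) * G ((M - 5) / (4 * M)) \<le> (1 - p) * (1/2)"
    using \<open>p \<le> 1\<close> G_le_half by (intro mult_left_mono) auto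
  ultimately show ?thesis unfolding c by linarith
qed

end
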